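(* Let $\phi$ be a cocycle with respect to $\theta$ on $\mathbb{R}^+\times\Sigma\times X$ having a nested bounded pullback absorbing set $\{B_\sigma\}_{\sigma\in\Sigma}$. Assume that for every $\varepsilon>0$ and every $\sigma\in\Sigma$ there exist $T=T(B_\sigma,\varepsilon)\ge0$ and a function $\psi_{T,\sigma}\in\mathrm{Contr}(B_\sigma)$ such that $$\|\phi(T,\theta_{-T}(\sigma);x)-\phi(T,\theta_{-T}(\sigma);y)\|\le\varepsilon+\psi_{T,\sigma}(x,y)\quad\text{for all }x,y\in B_\sigma.$$ Then $\phi$ is pullback asymptotically compact.
   Context: Let $X$ be a Banach space with norm $\|\cdot\|$. Let $\Sigma$ be a set and $\theta=\{\theta_t\}_{t\in\mathbb{R}}$ a group of bijections $\theta_t:\Sigma\to\Sigma$ with $\theta_0=\mathrm{id}$ and $\theta_{t+\tau}=\theta_t\circ\theta_\tau$. A cocycle with respect to $\theta$ is a map $\phi:\mathbb{R}^+\times\Sigma\times X\to X$ with $\phi(0,\sigma;x)=x$ and $\phi(s+t,\sigma;x)=\phi(s,\theta_t(\sigma);\phi(t,\sigma;x))$ for all $s,t\ge 0$. For $B\subset X$, $\phi(t,\sigma;B)=\{\phi(t,\sigma;x):x\in B\}$. A bounded pullback absorbing set is a family $\{B_\sigma\}_{\sigma\in\Sigma}$ of bounded subsets of $X$ such that for every $\sigma$ and bounded $B\subset X$ there is $T\ge0$ with $\phi(t,\theta_{-t}(\sigma);B)\subset B_\sigma$ for all $t\ge T$; it is nested if moreover $B_{\theta_{-t}(\sigma)}\subset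 B_\sigma$ for all $t\ge0$, $\sigma\in\Sigma$. For a bounded set $B\subset X$, $\mathrm{Contr}(B)$ denotes the set of functions $\psi:X\times X\to\mathbb{R}$ such that every sequence $\{x_n\}\subset B$ has a subsequence $\{x_{n_k}\}$ with $\lim_{k\to\infty}\lim_{l\to\infty}\psi(x_{n_k},x_{n_l})=0$. $\phi$ is pullback asymptotically compact if for each $\sigma\in\Sigma$, every bounded sequence $\{x_n\}\subset X$ and every $\{t_n\}\subset\mathbb{R}^+$ with $t_n\to+\infty$, the sequence $\{\phi(t_n,\theta_{-t_n}(\sigma);x_n)\}$ is precompact in $X$. *)

theory Defs
  imports "HOL-Analysis.Analysis"
begin

definition flow_group :: "(real \<Rightarrow> 's \<Rightarrow> 's) \<Rightarrow> bool" where
  "flow_group \<theta> \<longleftrightarrow> (\<forall>t. bij (\<theta> t)) \<and> \<theta> 0 = id \<and>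
     (\<forall>t \<tau>. \<theta> (t + \<tau>) = \<theta> t \<circ> \<theta> \<tau>)"

text \<open>Cocycle with respect to theta; only times t >= 0 are relevant.\<close>
definition cocycle :: "(real \<Rightarrow> 's \<Rightarrow> 's) \<Rightarrow> (real \<Rightarrow> 's \<Rightarrow> 'x \<Rightarrow> 'x) \<Rightarrow> bool" where
  "cocycle \<theta> \<phi> \<longleftrightarrow> (\<forall>\<sigma> x. \<phi> 0 \<sigma> x = x) \<and>
     (\<forall>s t \<sigma> x. s \<ge> 0 \<longrightarrow> t \<ge> 0 \<longrightarrow> \<phi> (s + t) \<sigma> x = \<phi> s (\<theta> t \<sigma>) (\<phi> t \<sigma> x))"

definition bounded_pullback_absorbing ::
  "(real \<Rightarrow> 's \<Rightarrow> 's) \<Rightarrow> (real \<Rightarrow> 's \<Rightarrow> 'x::real_normed_vector \<Rightarrow> 'x) \<Rightarrow> ('s \<Rightarrow> 'x set) \<Rightarrow> bool" where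
  "bounded_pullback_absorbing \<theta> \<phi> B \<longleftrightarrow> (\<forall>\<sigma>. bounded (B \<sigma>)) \<and>
     (\<forall>\<sigma> D. bounded D \<longrightarrow> (\<exists>T\<ge>0. \<forall>t\<ge>T. \<phi> t (\<theta> (-t) \<sigma>) ` D \<subseteq> B \<sigma>))"

definition nested_family :: "(real \<Rightarrow> 's \<Rightarrow> 's) \<Rightarrow> ('s \<Rightarrow> 'x set) \<Rightarrow> bool" where
  "nested_family \<theta> B \<longleftrightarrow> (\<forall>\<sigma> t. t \<ge> 0 \<longrightarrow> B (\<theta> (-t) \<sigma>) \<subseteq> B \<sigma>)"

definition Contr :: "'x set \<Rightarrow> ('x \<Rightarrow> 'x \<Rightarrow> real) set" where
  "Contr B = {\<psi>. \<forall>x::nat \<Rightarrow> 'x. (\<forall>n. x n \<in> B) \<longrightarrow>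
     (\<exists>r L. strict_mono r \<and> (\<forall>k. (\<lambda>l. \<psi> (x (r k)) (x (r l))) \<longlonglongrightarrow> L k) \<and> L \<longlonglongrightarrow> 0)}"

definition pullback_asymptotically_compact ::
  "(real \<Rightarrow> 's \<Rightarrow> 's) \<Rightarrow> (real \<Rightarrow> 's \<Rightarrow> 'x::real_normed_vector \<Rightarrow> 'x) \<Rightarrow> bool" where
  "pullback_asymptotically_compact \<theta> \<phi> \<longleftrightarrow>
     (\<forall>\<sigma> (x::nat \<Rightarrow> 'x) (t::nat \<Rightarrow> real). bounded (range x) \<longrightarrow> (\<forall>n. t n \<ge> 0) \<longrightarrow>
        filterlim t at_top sequentially \<longrightarrow>
        compact (closure (range (\<lambda>n. \<phi> (t n) (\<theta> (- t n) \<sigma>) (x n)))))"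

end

theory Submission
  imports Defs
begin

text \<open>
  Write \<open>y n = \<phi> (t n) (\<theta> (- t n) \<sigma>) (x n)\<close>. As \<open>X\<close> is complete, it suffices that the range
  of \<open>y\<close> is totally bounded, i.e. that for no \<open>\<epsilon> > 0\<close> does it contain an injective
  \<open>\<epsilon>\<close>-separated sequence. Given \<open>\<epsilon>\<close>, take \<open>T\<close> and \<open>\<psi> \<in> Contr (B \<sigma>)\<close> for \<open>\<epsilon>/2\<close>. The cocycle
  property factors \<open>y n = \<phi> T (\<theta> (-T) \<sigma>) (z n)\<close> with \<open>z n = \<phi> (t n - T) (\<theta> (- t n) \<sigma>) (x n)\<close>,
  and by absorption and nestedness \<open>z n \<in> B (\<theta> (-T) \<sigma>) \<subseteq> B \<sigma>\<close> for large \<open>n\<close>. Hence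
  \<open>dist (y n) (y m) \<le> \<epsilon>/2 + \<psi> (z n) (z m)\<close>, and along any sequence of distinct terms of \<open>y\<close>
  the defining property of \<open>Contr\<close> yields two terms with \<open>\<psi> (z n) (z m) < \<epsilon>/2\<close>.
\<close>

lemma ex_separated_sequence:
  fixes S :: "'a::metric_space set"
  assumes not_covered: "\<And>K. finite K \<Longrightarrow> K \<subseteq> S \<Longrightarrow> \<not> S \<subseteq> (\<Union>x\<in>K. ball x e)"
  shows "\<exists>w :: nat \<Rightarrow> 'a. range w \<subseteq> S \<and> (\<forall>m n. m < n \<longrightarrow> e \<le> dist (w m) (w n))"
proof -
  let ?Q = "\<lambda>w n r. r \<in> S \<and> (\<forall>m < (n::nat). e \<le> dist (w m) r)"
  have "\<exists>w. \<forall>n. ?Q w n (w n)"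
  proof (rule dependent_wellorder_choice)
    fix n and w :: "nat \<Rightarrow> 'a"
    assume "\<And>m. m < n \<Longrightarrow> ?Q w m (w m)"
    then have "\<not> S \<subseteq> (\<Union>x\<in>w ` {..<n}. ball x e)"
      using not_covered[of "w ` {..<n}"] by auto
    then obtain r where "r \<in> S" "\<And>m. m < n \<Longrightarrow> r \<notin> ball (w m) e"
      by blast
    then show "\<exists>r. ?Q w n r"
      by (auto simp: not_less)
  qed simp
  then obtain w where "\<And>n. ?Q w n (w n)"
    by blast
  then show ?thesis
    by (intro exI[of _ w]) auto
qed

lemma compact_closure_if_no_separated_sequence:
  fixes S :: "'a::complete_space set"
  assumes close_pair: "\<And>e (w :: nat \<Rightarrow> 'a). e > 0 \<Longrightarrow> inj w \<Longrightarrow> range w \<subseteq> S \<Longrightarrow>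
      \<exists>m n. m < n \<and> dist (w m) (w n) < e"
  shows "compact (closure S)"
proof -
  have "Met_TC.mtotally_bounded S"
    unfolding Met_TC.mtotally_bounded_def mball_eq_ball
  proof (intro allI impI)
    fix e :: real
    assume "e > 0"
    show "\<exists>K. finite K \<and> K \<subseteq> S \<and> S \<subseteq> (\<Union>x\<in>K. ball x e)"
    proof (rule ccontr)
      assume "\<not> ?thesis"
      then have "\<And>K. finite K \<Longrightarrow> K \<subseteq> S \<Longrightarrow> \<not> S \<subseteq> (\<Union>x\<in>K. ball x e)"
        by meson
      then obtain w :: "nat \<Rightarrow> 'a" where w: "range w \<subseteq> S"
        and sep: "\<And>m n. m < n \<Longrightarrow> e \<le> dist (w m) (w n)"
        using ex_separated_sequence[of S e] by meson
      have "inj w"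
      proof (rule injI, rule ccontr)
        fix m n
        assume "w m = w n" "m \<noteq> n"
        then consider "m < n" | "n < m"
          by linarith
        then show False
          using sep[of m n] sep[of n m] \<open>w m = w n\<close> \<open>e > 0\<close> by cases simp_all
      qed
      then obtain m n where "m < n" "dist (w m) (w n) < e"
        using close_pair[OF \<open>e > 0\<close> _ w] by blast
      then show False
        using sep[of m n] by linarith
    qed
  qed
  moreover have "Met_TC.mcomplete TYPE('a)"
    by (simp add: complete_UNIV)
  ultimately show ?thesis
    using Met_TC.mtotally_bounded_eq_compact_closure_of by force
qed

lemma Contr_ex_small_pair:
  fixes u :: "nat \<Rightarrow> 'a"
  assumes "\<psi> \<in> Contr A" and "\<And>n. u n \<in> A" and "e > 0"
  shows "\<exists>m n. m < n \<and> \<psi> (u m) (u n) < e"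
proof -
  have "(\<forall>n. u n \<in> A) \<longrightarrow>
      (\<exists>r L. strict_mono r \<and> (\<forall>k. (\<lambda>l. \<psi> (u (r k)) (u (r l))) \<longlonglongrightarrow> L k) \<and> L \<longlonglongrightarrow> 0)"
    using assms(1) unfolding Contr_def by blast
  then obtain r L where "strict_mono r" and inner: "\<And>k. (\<lambda>l. \<psi> (u (r k)) (u (r l))) \<longlonglongrightarrow> L k"
    and "L \<longlonglongrightarrow> 0"
    using assms(2) by blast
  obtain k where "L k < e"
    using order_tendstoD(2)[OF \<open>L \<longlonglongrightarrow> 0\<close> \<open>e > 0\<close>] by (auto simp: eventually_sequentially)
  then have "\<forall>\<^sub>F l in sequentially. k < l \<and> \<psi> (u (r k)) (u (r l)) < e"
    using eventually_conj[OF eventually_gt_at_top order_tendstoD(2)[OF inner]] by blast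
  then obtain l where "k < l" "\<psi> (u (r k)) (u (r l)) < e"
    using eventually_happens'[OF sequentially_bot] by blast
  then show ?thesis
    using strict_monoD[OF \<open>strict_mono r\<close> \<open>k < l\<close>] by blast
qed

lemma inj_eventually_ge:
  fixes f :: "nat \<Rightarrow> nat"
  assumes "inj f"
  shows "\<forall>\<^sub>F j in sequentially. N \<le> f j"
proof -
  have "finite (f -` {..<N})"
    using finite_vimageI[OF _ assms] by simp
  then show ?thesis
    unfolding cofinite_eq_sequentially[symmetric] eventually_cofinite by (simp add: not_le vimage_def)
qed

lemma compact_closure_range_if_Contr_controlled:
  fixes y :: "nat \<Rightarrow> 'a::complete_space"
  assumes controlled: "\<And>e. e > 0 \<Longrightarrow> \<exists>A :: 'b set. \<exists>\<psi>\<in>Contr A. \<exists>z N. \<forall>n\<ge>N.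
      z n \<in> A \<and> (\<forall>m\<ge>N. dist (y n) (y m) \<le> e + \<psi> (z n) (z m))"
  shows "compact (closure (range y))"
proof (rule compact_closure_if_no_separated_sequence)
  fix e :: real and w :: "nat \<Rightarrow> 'a"
  assume "e > 0" "inj w" "range w \<subseteq> range y"
  then have "\<forall>j. \<exists>i. w j = y i"
    by blast
  then obtain ix where ix: "\<And>j. w j = y (ix j)"
    by metis
  have "inj ix"
    using \<open>inj w\<close> unfolding inj_def ix by metis
  obtain A :: "'b set" and \<psi> z N where "\<psi> \<in> Contr A" and bound: "\<And>n. n \<ge> N \<Longrightarrow>
      z n \<in> A \<and> (\<forall>m\<ge>N. dist (y n) (y m) \<le> e/2 + \<psi> (z n) (z m))"
    using controlled[of "e/2"] \<open>e > 0\<close> by auto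
  obtain j0 where j0: "\<And>j. j \<ge> j0 \<Longrightarrow> N \<le> ix j"
    using inj_eventually_ge[OF \<open>inj ix\<close>] by (auto simp: eventually_sequentially)
  define u where "u j = z (ix (j + j0))" for j
  have "\<And>j. u j \<in> A"
    using bound j0 by (simp add: u_def)
  then obtain m n where "m < n" and small: "\<psi> (u m) (u n) < e/2"
    using Contr_ex_small_pair[OF \<open>\<psi> \<in> Contr A\<close>] \<open>e > 0\<close> by (meson half_gt_zero)
  have "dist (w (m + j0)) (w (n + j0)) \<le> e/2 + \<psi> (u m) (u n)"
    using bound j0 by (simp add: ix u_def)
  with \<open>m < n\<close> small show "\<exists>m n. m < n \<and> dist (w m) (w n) < e"
    by (intro exI[of _ "m + j0"] exI[of _ "n + j0"]) auto
qed

lemma flow_group_comp: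
  assumes "flow_group \<theta>"
  shows "\<theta> s (\<theta> t \<sigma>) = \<theta> (s + t) \<sigma>"
  using assms unfolding flow_group_def by simp

lemma cocycle_pullback_split:
  assumes "flow_group \<theta>" and "cocycle \<theta> \<phi>" and "0 \<le> T" and "T \<le> t"
  shows "\<phi> t (\<theta> (-t) \<sigma>) x = \<phi> T (\<theta> (-T) \<sigma>) (\<phi> (t - T) (\<theta> (-t) \<sigma>) x)"
proof -
  have "\<phi> (T + (t - T)) (\<theta> (-t) \<sigma>) x = \<phi> T (\<theta> (t - T) (\<theta> (-t) \<sigma>)) (\<phi> (t - T) (\<theta> (-t) \<sigma>) x)"
    using assms(2-4) unfolding cocycle_def by (metis diff_ge_0_iff_ge)
  then show ?thesis
    by (simp add: flow_group_comp[OF assms(1)])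
qed

lemma pullback_eventually_in_absorbing:
  assumes "flow_group \<theta>" and "bounded_pullback_absorbing \<theta> \<phi> B" and "nested_family \<theta> B"
    and "bounded (range x)" and "filterlim t at_top sequentially" and "0 \<le> T"
  shows "\<forall>\<^sub>F n in sequentially. \<phi> (t n - T) (\<theta> (- t n) \<sigma>) (x n) \<in> B \<sigma>"
proof -
  obtain T0 where absorb: "\<And>s. s \<ge> T0 \<Longrightarrow> \<phi> s (\<theta> (-s) (\<theta> (-T) \<sigma>)) ` range x \<subseteq> B (\<theta> (-T) \<sigma>)"
    using assms(2,4) unfolding bounded_pullback_absorbing_def by meson
  have nested: "B (\<theta> (-T) \<sigma>) \<subseteq> B \<sigma>"
    using assms(3,6) unfolding nested_family_def by blast
  have "\<forall>\<^sub>F n in sequentially. T + T0 \<le> t n"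
    using assms(5) by (simp add: filterlim_at_top)
  then show ?thesis
  proof (rule eventually_mono)
    fix n
    assume "T + T0 \<le> t n"
    then have "\<phi> (t n - T) (\<theta> (-(t n - T)) (\<theta> (-T) \<sigma>)) (x n) \<in> B (\<theta> (-T) \<sigma>)"
      using absorb[of "t n - T"] by auto
    then show "\<phi> (t n - T) (\<theta> (- t n) \<sigma>) (x n) \<in> B \<sigma>"
      using nested by (auto simp: flow_group_comp[OF assms(1)])
  qed
qed

lemma pullback_orbit_eventually_factors:
  assumes "flow_group \<theta>" and "cocycle \<theta> \<phi>" and "bounded_pullback_absorbing \<theta> \<phi> B"
    and "nested_family \<theta> B" and "bounded (range x)" and "filterlim t at_top sequentially"
    and "0 \<le> T"
  shows "\<forall>\<^sub>F n in sequentially. \<phi> (t n - T) (\<theta> (- t n) \<sigma>) (x n) \<in> B \<sigma> \<and>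
    \<phi> (t n) (\<theta> (- t n) \<sigma>) (x n) = \<phi> T (\<theta> (-T) \<sigma>) (\<phi> (t n - T) (\<theta> (- t n) \<sigma>) (x n))"
proof -
  have "\<forall>\<^sub>F n in sequentially. T \<le> t n"
    using assms(6) by (simp add: filterlim_at_top)
  with pullback_eventually_in_absorbing[OF assms(1,3-7)]
  have "\<forall>\<^sub>F n in sequentially. \<phi> (t n - T) (\<theta> (- t n) \<sigma>) (x n) \<in> B \<sigma> \<and> T \<le> t n"
    by (rule eventually_conj)
  then show ?thesis
  proof (rule eventually_mono)
    fix n
    assume "\<phi> (t n - T) (\<theta> (- t n) \<sigma>) (x n) \<in> B \<sigma> \<and> T \<le> t n"
    then show "\<phi> (t n - T) (\<theta> (- t n) \<sigma>) (x n) \<in> B \<sigma> \<and>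
        \<phi> (t n) (\<theta> (- t n) \<sigma>) (x n) = \<phi> T (\<theta> (-T) \<sigma>) (\<phi> (t n - T) (\<theta> (- t n) \<sigma>) (x n))"
      using cocycle_pullback_split[OF assms(1,2,7), where t = "t n"] by blast
  qed
qed

lemma pullback_orbit_Contr_controlled:
  fixes \<phi> :: "real \<Rightarrow> 's \<Rightarrow> 'x::real_normed_vector \<Rightarrow> 'x"
  assumes "flow_group \<theta>" and "cocycle \<theta> \<phi>" and "bounded_pullback_absorbing \<theta> \<phi> B"
    and "nested_family \<theta> B" and "bounded (range x)" and "filterlim t at_top sequentially"
    and "0 \<le> T" and "\<psi> \<in> Contr (B \<sigma>)"
    and contracting: "\<And>a b. a \<in> B \<sigma> \<Longrightarrow> b \<in> B \<sigma> \<Longrightarrow>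
      norm (\<phi> T (\<theta> (-T) \<sigma>) a - \<phi> T (\<theta> (-T) \<sigma>) b) \<le> e + \<psi> a b"
  shows "\<exists>A :: 'x set. \<exists>\<psi>\<in>Contr A. \<exists>z N. \<forall>n\<ge>N. z n \<in> A \<and> (\<forall>m\<ge>N.
    dist (\<phi> (t n) (\<theta> (- t n) \<sigma>) (x n)) (\<phi> (t m) (\<theta> (- t m) \<sigma>) (x m)) \<le> e + \<psi> (z n) (z m))"
proof -
  define z where "z n = \<phi> (t n - T) (\<theta> (- t n) \<sigma>) (x n)" for n
  obtain N where N: "\<And>n. n \<ge> N \<Longrightarrow> z n \<in> B \<sigma> \<and> \<phi> (t n) (\<theta> (- t n) \<sigma>) (x n) = \<phi> T (\<theta> (-T) \<sigma>) (z n)"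
    using pullback_orbit_eventually_factors[OF assms(1-7)]
    unfolding z_def eventually_sequentially by blast
  have "dist (\<phi> (t n) (\<theta> (- t n) \<sigma>) (x n)) (\<phi> (t m) (\<theta> (- t m) \<sigma>) (x m)) \<le> e + \<psi> (z n) (z m)"
    if "n \<ge> N" "m \<ge> N" for n m
    using contracting[of "z n" "z m"] N[OF that(1)] N[OF that(2)] by (simp add: dist_norm)
  then show ?thesis
    using N \<open>\<psi> \<in> Contr (B \<sigma>)\<close> by blast
qed

theorem theorem4p2:
  fixes \<theta> :: "real \<Rightarrow> 's \<Rightarrow> 's"
    and \<phi> :: "real \<Rightarrow> 's \<Rightarrow> 'x::banach \<Rightarrow> 'x"
    and B :: "'s \<Rightarrow> 'x set"
  assumes "flow_group \<theta>"
    and "cocycle \<theta> \<phi>"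
    and "bounded_pullback_absorbing \<theta> \<phi> B"
    and "nested_family \<theta> B"
    and "\<forall>\<epsilon>>0. \<forall>\<sigma>. \<exists>T\<ge>0. \<exists>\<psi>\<in>Contr (B \<sigma>). \<forall>x\<in>B \<sigma>. \<forall>y\<in>B \<sigma>.
           norm (\<phi> T (\<theta> (-T) \<sigma>) x - \<phi> T (\<theta> (-T) \<sigma>) y) \<le> \<epsilon> + \<psi> x y"
  shows "pullback_asymptotically_compact \<theta> \<phi>"
  unfolding pullback_asymptotically_compact_def
proof (intro allI impI)
  fix \<sigma> and x :: "nat \<Rightarrow> 'x" and t :: "nat \<Rightarrow> real"
  assume "bounded (range x)" "\<forall>n. 0 \<le> t n" "filterlim t at_top sequentially"
  show "compact (closure (range (\<lambda>n. \<phi> (t n) (\<theta> (- t n) \<sigma>) (x n))))"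
  proof (rule compact_closure_range_if_Contr_controlled[where 'b = 'x])
    fix e :: real
    assume "e > 0"
    then obtain T \<psi> where "T \<ge> 0" "\<psi> \<in> Contr (B \<sigma>)" and "\<And>a b. a \<in> B \<sigma> \<Longrightarrow> b \<in> B \<sigma> \<Longrightarrow>
        norm (\<phi> T (\<theta> (-T) \<sigma>) a - \<phi> T (\<theta> (-T) \<sigma>) b) \<le> e + \<psi> a b"
      using assms(5) by meson
    then show "\<exists>A :: 'x set. \<exists>\<psi>\<in>Contr A. \<exists>z N. \<forall>n\<ge>N. z n \<in> A \<and> (\<forall>m\<ge>N.
        dist (\<phi> (t n) (\<theta> (- t n) \<sigma>) (x n)) (\<phi> (t m) (\<theta> (- t m) \<sigma>) (x m)) \<le> e + \<psi> (z n) (z m))"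
      by (intro pullback_orbit_Contr_controlled[OF assms(1-4) \<open>bounded (range x)\<close>
          \<open>filterlim t at_top sequentially\<close>])
  qed
qed

end
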